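(* $G(x)=\{u\in L : (u,u)=2\}$.
   Context: $\mathbb F$ is a field of characteristic zero and $\mathfrak{sl}_2$ is the Lie algebra of $2\times2$ trace-zero matrices over $\mathbb F$, with trace form $(u,v)=\mathrm{tr}(uv)$. The equitable basis is $x=\begin{pmatrix}1&0\\0&-1\end{pmatrix}$, $y=\begin{pmatrix}-1&2\\0&1\end{pmatrix}$, $z=\begin{pmatrix}-1&0\\-2&1\end{pmatrix}$. Let $x^*=\begin{pmatrix}1&-1\\1&-1\end{pmatrix}$, $y^*=\begin{pmatrix}0&0\\1&0\end{pmatrix}$, $z^*=\begin{pmatrix}0&-1\\0&0\end{pmatrix}$ (these are nilpotent). $G$ is the subgroup of $\mathrm{Aut}_{\mathbb F}(\mathfrak{sl}_2)$ generated by $\exp(\mathrm{ad}\,x^* )$, $\exp(\mathrm{ad}\,y^* )$ and $\exp(\mathrm{ad}\,z^* )$. $G(x)$ is the $G$-orbit of $x$. $L=\mathbb Zx\oplus\mathbb Zy\oplus\mathbb Zz$. *)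

theory Defs
  imports Main
begin

text \<open>2x2 matrices over a field; M2 a b c d is the matrix with rows (a b) and (c d).\<close>
datatype 'a mat2 = M2 'a 'a 'a 'a

fun mmul :: "'a::field mat2 \<Rightarrow> 'a mat2 \<Rightarrow> 'a mat2" where
  "mmul (M2 a b c d) (M2 e f g h) = M2 (a*e+b*g) (a*f+b*h) (c*e+d*g) (c*f+d*h)"

fun madd :: "'a::field mat2 \<Rightarrow> 'a mat2 \<Rightarrow> 'a mat2" where
  "madd (M2 a b c d) (M2 e f g h) = M2 (a+e) (b+f) (c+g) (d+h)"

fun msub :: "'a::field mat2 \<Rightarrow> 'a mat2 \<Rightarrow> 'a mat2" where
  "msub (M2 a b c d) (M2 e f g h) = M2 (a-e) (b-f) (c-g) (d-h)"

fun msmult :: "'a::field \<Rightarrow> 'a mat2 \<Rightarrow> 'a mat2" where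
  "msmult k (M2 a b c d) = M2 (k*a) (k*b) (k*c) (k*d)"

fun mtr :: "'a::field mat2 \<Rightarrow> 'a" where
  "mtr (M2 a b c d) = a + d"

definition sl2 :: "'a::field mat2 set" where
  "sl2 = {u. mtr u = 0}"

definition trform :: "'a::field mat2 \<Rightarrow> 'a mat2 \<Rightarrow> 'a" where
  "trform u v = mtr (mmul u v)"

definition ad :: "'a::field mat2 \<Rightarrow> 'a mat2 \<Rightarrow> 'a mat2" where
  "ad n u = msub (mmul n u) (mmul u n)"

text \<open>Exponential of the nilpotent operator ad n (n nilpotent in sl2, so (ad n)^3 = 0):
  exp(ad n) = sum over k<3 of (ad n)^k / k!.\<close>
definition exp_ad :: "'a::field mat2 \<Rightarrow> 'a mat2 \<Rightarrow> 'a mat2" where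
  "exp_ad n u = madd u (madd (ad n u) (msmult (1/2) ((ad n ^^ 2) u)))"

definition ex :: "'a::field mat2" where "ex = M2 1 0 0 (-1)"
definition ey :: "'a::field mat2" where "ey = M2 (-1) 2 0 1"
definition ez :: "'a::field mat2" where "ez = M2 (-1) 0 (-2) 1"
definition xs :: "'a::field mat2" where "xs = M2 1 (-1) 1 (-1)"
definition ys :: "'a::field mat2" where "ys = M2 0 0 1 0"
definition zs :: "'a::field mat2" where "zs = M2 0 (-1) 0 0"

text \<open>The group G generated (under composition) by exp(ad x*), exp(ad y*), exp(ad z*);
  these are bijections, so inverses are the function inverses.\<close>
inductive_set Ggrp :: "('a::field mat2 \<Rightarrow> 'a mat2) set" where
  gen_x: "exp_ad xs \<in> Ggrp"
| gen_y: "exp_ad ys \<in> Ggrp"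
| gen_z: "exp_ad zs \<in> Ggrp"
| ident: "id \<in> Ggrp"
| comp: "f \<in> Ggrp \<Longrightarrow> g \<in> Ggrp \<Longrightarrow> f \<circ> g \<in> Ggrp"
| inverse: "f \<in> Ggrp \<Longrightarrow> inv f \<in> Ggrp"

definition Lat :: "'a::field mat2 set" where
  "Lat = {madd (msmult (of_int a) ex) (madd (msmult (of_int b) ey) (msmult (of_int c) ez))
          | a b c :: int. True}"

end

theory Submission imports Defs begin

(* Inclusion "orbit within the lattice": for a square-zero n, exp(ad n) is conjugation
   by 1 + n; the three generators are integer square-zero matrices, so every element of G
   is conjugation by a matrix of SL2(Z).  Such a conjugation sends x into L and preserves
   the trace form, which is 2 on x.

   Converse inclusion: writing u = a x + b y + c z as the matrix [[p, 2b'], [2c', -p]]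
   (lattice coordinates p, b', c'), the norm condition (u,u) = 2 reads p^2 + 4b'c' = 1.
   The generators exp (ad zs) and exp (ad ys) act on these coordinates by explicit integer
   formulas.  When |c'| <= |b'|, exp (ad zs) or its inverse strictly lowers |b'| + |c'|
   unless b' = c' = 0; the element exp (ad zs) exp (ad ys) exp (ad zs) exchanges the roles of
   b' and c', covering the other case.  Since G preserves membership in the orbit, descent
   on |b'| + |c'| reduces every norm-2 lattice vector to x or -x, both in the orbit. *)

text \<open>Conjugation of u by the integer matrix [[a, b], [c, d]], using its adjugate;
  for determinant 1 the adjugate is the inverse.\<close>
definition conj_int :: "int \<Rightarrow> int \<Rightarrow> int \<Rightarrow> int \<Rightarrow> 'a::field_char_0 mat2 \<Rightarrow> 'a mat2" where
  "conj_int a b c d u = mmul (mmul (M2 (of_int a) (of_int b) (of_int c) (of_int d)) u)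
       (M2 (of_int d) (of_int (-b)) (of_int (-c)) (of_int a))"

definition sl2z_conj :: "('a::field_char_0 mat2 \<Rightarrow> 'a mat2) \<Rightarrow> bool" where
  "sl2z_conj f \<longleftrightarrow> (\<exists>a b c d. a*d - b*c = 1 \<and> f = conj_int a b c d)"

lemma conj_int_comp:
  "conj_int a b c d \<circ> conj_int a' b' c' d' =
   (conj_int (a*a'+b*c') (a*b'+b*d') (c*a'+d*c') (c*b'+d*d') :: 'a::field_char_0 mat2 \<Rightarrow> _)"
proof
  fix u :: "'a mat2"
  show "(conj_int a b c d \<circ> conj_int a' b' c' d') u
      = conj_int (a*a'+b*c') (a*b'+b*d') (c*a'+d*c') (c*b'+d*d') u"
    by (cases u) (simp add: conj_int_def algebra_simps)
qed

lemma conj_int_cancel: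
  assumes "a*d - b*c = 1"
  shows "conj_int d (-b) (-c) a (conj_int a b c d u) = (u :: 'a::field_char_0 mat2)"
proof -
  have det: "of_int a * of_int d - of_int b * of_int c = (1::'a)"
    using arg_cong[OF assms, of "of_int :: int \<Rightarrow> 'a"] by simp
  obtain p q r s where u: "u = M2 p q r s" by (cases u)
  show ?thesis using det unfolding u conj_int_def by simp algebra
qed

lemma sl2z_conj_comp:
  assumes "sl2z_conj f" "sl2z_conj g"
  shows "sl2z_conj (f \<circ> g)"
proof -
  obtain a b c d where det: "a*d - b*c = 1" and f: "f = conj_int a b c d"
    using assms(1) sl2z_conj_def by blast
  obtain a' b' c' d' where det': "a'*d' - b'*c' = 1" and g: "g = conj_int a' b' c' d'"
    using assms(2) sl2z_conj_def by blast
  have "(a*a'+b*c')*(c*b'+d*d') - (a*b'+b*d')*(c*a'+d*c') = (a*d-b*c)*(a'*d'-b'*c')"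
    by (simp add: algebra_simps)
  then show ?thesis unfolding sl2z_conj_def f g conj_int_comp using det det' by auto
qed

lemma sl2z_conj_inv:
  assumes "sl2z_conj f"
  shows "sl2z_conj (inv f)"
proof -
  obtain a b c d where det: "a*d - b*c = 1" and f: "f = conj_int a b c d"
    using assms sl2z_conj_def by blast
  have det': "d*a - (-b)*(-c) = 1" using det by (simp add: algebra_simps)
  have "inv f = conj_int d (-b) (-c) a"
    by (rule inv_equality) (use conj_int_cancel[OF det] conj_int_cancel[OF det'] f in simp_all)
  then show ?thesis using det' sl2z_conj_def by blast
qed

lemma sl2z_conj_inj: "sl2z_conj f \<Longrightarrow> inj f"
  unfolding sl2z_conj_def by (metis conj_int_cancel injI)

text \<open>For a square-zero n, (ad n)^2 u = -2 n u n, so exp(ad n) u = (1 + n) u (1 - n).\<close>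
lemma exp_ad_square_zero:
  fixes n u :: "'a::field_char_0 mat2"
  assumes "mmul n n = M2 0 0 0 0"
  shows "exp_ad n u = mmul (mmul (madd (M2 1 0 0 1) n) u) (msub (M2 1 0 0 1) n)"
proof -
  obtain a b c d where n: "n = M2 a b c d" by (cases n)
  obtain p q r s where u: "u = M2 p q r s" by (cases u)
  have "a*a+b*c = 0" "a*b+b*d = 0" "c*a+d*c = 0" "c*b+d*d = 0" using assms by (simp_all add: n)
  then show ?thesis unfolding n u by (simp add: exp_ad_def ad_def numeral_2_eq_2) algebra
qed

lemma exp_ad_int_nilpotent:
  assumes "a*a + b*c = 0"
  shows "sl2z_conj (exp_ad (M2 (of_int a) (of_int b) (of_int c) (of_int (-a)) :: 'a::field_char_0 mat2))"
proof -
  let ?n = "M2 (of_int a) (of_int b) (of_int c) (of_int (-a)) :: 'a mat2"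
  have sq: "mmul ?n ?n = M2 0 0 0 0"
    using arg_cong[OF assms, of "of_int :: int \<Rightarrow> 'a"] by (simp add: algebra_simps)
  have "exp_ad ?n = conj_int (1+a) b c (1-a)"
  proof
    fix u :: "'a mat2"
    show "exp_ad ?n u = conj_int (1+a) b c (1-a) u"
      unfolding exp_ad_square_zero[OF sq] by (cases u) (simp add: conj_int_def)
  qed
  moreover have "(1+a)*(1-a) - b*c = 1" using assms by (simp add: algebra_simps)
  ultimately show ?thesis unfolding sl2z_conj_def by blast
qed

lemma Ggrp_sl2z_conj: "f \<in> Ggrp \<Longrightarrow> sl2z_conj (f :: 'a::field_char_0 mat2 \<Rightarrow> _)"
proof (induction rule: Ggrp.induct)
  case gen_x
  show ?case using exp_ad_int_nilpotent[of 1 "-1" 1, where 'a='a] by (simp add: xs_def)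
next
  case gen_y
  show ?case using exp_ad_int_nilpotent[of 0 0 1, where 'a='a] by (simp add: ys_def)
next
  case gen_z
  show ?case using exp_ad_int_nilpotent[of 0 "-1" 0, where 'a='a] by (simp add: zs_def)
next
  case ident
  have "id = (conj_int 1 0 0 1 :: 'a mat2 \<Rightarrow> _)"
  proof
    fix u :: "'a mat2"
    show "id u = conj_int 1 0 0 1 u" by (cases u) (simp add: conj_int_def)
  qed
  then show ?case unfolding sl2z_conj_def by (intro exI[of _ 1] exI[of _ 0] exI[of _ 0] exI[of _ 1]) simp
next
  case (comp f g)
  then show ?case by (blast intro: sl2z_conj_comp)
next
  case (inverse f)
  then show ?case by (blast intro: sl2z_conj_inv)
qed

lemma sl2z_conj_ex:
  assumes "sl2z_conj f"
  shows "f (ex :: 'a::field_char_0 mat2) \<in> Lat \<and> trform (f ex) (f ex) = 2"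
proof -
  obtain a b c d where det: "a*d - b*c = 1" and f: "f = conj_int a b c d"
    using assms sl2z_conj_def by blast
  have det_F: "of_int a * of_int d - of_int b * of_int c = (1::'a)"
    using arg_cong[OF det, of "of_int :: int \<Rightarrow> 'a"] by simp
  have "f ex = madd (msmult (of_int (a*d+b*c - a*b - c*d)) ex)
     (madd (msmult (of_int (-a*b)) ey) (msmult (of_int (-c*d)) ez))"
    by (simp add: f conj_int_def ex_def ey_def ez_def algebra_simps)
  then have "f ex \<in> Lat" unfolding Lat_def by blast
  moreover have "trform (f ex) (f ex) = 2"
    using det_F by (simp add: f conj_int_def ex_def trform_def) algebra
  ultimately show ?thesis by blast
qed

definition lat :: "int \<Rightarrow> int \<Rightarrow> int \<Rightarrow> 'a::field_char_0 mat2" where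
  "lat p b c = M2 (of_int p) (of_int (2*b)) (of_int (2*c)) (of_int (-p))"

lemma Lat_lat:
  assumes "u \<in> Lat"
  obtains p b c where "u = (lat p b c :: 'a::field_char_0 mat2)"
proof -
  obtain a b c :: int where u: "u = madd (msmult (of_int a) ex) (madd (msmult (of_int b) ey) (msmult (of_int c) ez))"
    using assms unfolding Lat_def by blast
  have "u = lat (a-b-c) b (-c)" unfolding u by (simp add: lat_def ex_def ey_def ez_def algebra_simps)
  then show ?thesis by (rule that)
qed

lemma trform_lat: "trform (lat p b c) (lat p b c) = (of_int (2*(p^2 + 4*b*c)) :: 'a::field_char_0)"
  by (simp add: lat_def trform_def algebra_simps power2_eq_square)

lemma lat_ex: "lat 1 0 0 = ex"
  by (simp add: lat_def ex_def)

lemma exp_ad_zs_lat: "exp_ad zs (lat p b c) = (lat (p - 2*c) (b+p-c) c :: 'a::field_char_0 mat2)"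
  by (simp add: exp_ad_def zs_def lat_def ad_def numeral_2_eq_2 field_simps)

lemma exp_ad_ys_lat: "exp_ad ys (lat p b c) = (lat (p - 2*b) b (c+p-b) :: 'a::field_char_0 mat2)"
  by (simp add: exp_ad_def ys_def lat_def ad_def numeral_2_eq_2 field_simps)

text \<open>The element exp (ad zs) exp (ad ys) exp (ad zs) swaps the two off-diagonal coordinates
  (up to sign); it lets the descent treat only the case |c| \<le> |b|.\<close>
definition swap :: "'a::field_char_0 mat2 \<Rightarrow> 'a mat2" where
  "swap = exp_ad zs \<circ> exp_ad ys \<circ> exp_ad zs"

lemma swap_Ggrp: "swap \<in> Ggrp"
  unfolding swap_def by (intro Ggrp.comp Ggrp.gen_y Ggrp.gen_z)

lemma swap_lat: "swap (lat p b c) = (lat (-p) (-c) (-b) :: 'a::field_char_0 mat2)"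
  by (simp add: swap_def exp_ad_zs_lat exp_ad_ys_lat algebra_simps)

definition orbit_x :: "'a::field_char_0 mat2 set" where
  "orbit_x = (\<lambda>g. g ex) ` Ggrp"

lemma ex_orbit_x: "ex \<in> orbit_x"
  unfolding orbit_x_def using image_eqI[of _ "\<lambda>g. g ex" id, OF _ Ggrp.ident] by simp

text \<open>Membership in the orbit is invariant under every element of G (which is injective).\<close>
lemma orbit_x_invariant:
  assumes "f \<in> Ggrp"
  shows "f v \<in> orbit_x \<longleftrightarrow> v \<in> orbit_x"
proof
  assume "v \<in> orbit_x"
  then obtain g where g: "g \<in> Ggrp" "v = g ex" unfolding orbit_x_def by auto
  then have "f v = (f \<circ> g) ex" by simp
  then show "f v \<in> orbit_x" unfolding orbit_x_def using Ggrp.comp[OF assms g(1)] by blast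
next
  assume "f v \<in> orbit_x"
  then obtain g where g: "g \<in> Ggrp" "f v = g ex" unfolding orbit_x_def by auto
  have "inj f" using Ggrp_sl2z_conj[OF assms] sl2z_conj_inj by blast
  then have "v = (inv f \<circ> g) ex" using g by (metis comp_apply inv_f_f)
  then show "v \<in> orbit_x" unfolding orbit_x_def using Ggrp.comp Ggrp.inverse assms g(1) by blast
qed

text \<open>Arithmetic core: if p^2 + 4bc = 1, b \<noteq> 0 and |c| \<le> |b|, then |c| < |p| < 2|b| + |c|
  and bc \<le> 0, so replacing b by b \<mp> p - c with the right sign strictly lowers |b|.\<close>
lemma norm_one_reduce:
  fixes p b c :: int
  assumes norm: "p^2 + 4*b*c = 1" and cb: "\<bar>c\<bar> \<le> \<bar>b\<bar>" and b0: "b \<noteq> 0"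
  shows "\<bar>b - p - c\<bar> < \<bar>b\<bar> \<or> \<bar>b + p - c\<bar> < \<bar>b\<bar>"
proof -
  have p_sq: "p^2 = 1 - 4*(b*c)" using norm by (simp add: algebra_simps)
  have "p \<noteq> 0"
  proof
    assume "p = 0"
    then have "4*(b*c) = 1" using p_sq by simp
    then show False by presburger
  qed
  then have "1 \<le> \<bar>p\<bar>" by linarith
  then have "p^2 \<ge> 1" using abs_le_square_iff[of 1 p] by simp
  then have bc: "b*c \<le> 0" using p_sq by linarith
  then have bc_abs: "\<bar>b\<bar>*\<bar>c\<bar> = - (b*c)" by (simp add: abs_mult[symmetric] abs_of_nonpos)
  have "c^2 \<le> \<bar>b\<bar>*\<bar>c\<bar>"
    using mult_right_mono[OF cb, of "\<bar>c\<bar>"] by (simp add: power2_eq_square)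
  then have "c^2 < p^2" using p_sq bc_abs zero_le_power2[of c] by linarith
  then have cp: "\<bar>c\<bar> < \<bar>p\<bar>" using abs_le_square_iff[of p c] by linarith
  have "1 \<le> \<bar>b\<bar>" using b0 by linarith
  then have "b^2 \<ge> 1" using abs_le_square_iff[of 1 b] by simp
  moreover have "(2*\<bar>b\<bar> + \<bar>c\<bar>)^2 = 4*b^2 + 4*(\<bar>b\<bar>*\<bar>c\<bar>) + c^2"
    by (simp add: power2_eq_square algebra_simps)
  ultimately have "p^2 < (2*\<bar>b\<bar> + \<bar>c\<bar>)^2" using p_sq bc_abs zero_le_power2[of c] by linarith
  then have pb: "\<bar>p\<bar> < 2*\<bar>b\<bar> + \<bar>c\<bar>" using abs_le_square_iff[of "2*\<bar>b\<bar> + \<bar>c\<bar>" p] by simp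
  have "(b > 0 \<and> c \<le> 0) \<or> (b < 0 \<and> c \<ge> 0)" using b0 bc by (auto simp: mult_le_0_iff)
  then show ?thesis using cp pb by linarith
qed

lemma descent_step_b:
  assumes norm: "p^2 + 4*b*c = 1" and cb: "\<bar>c\<bar> \<le> \<bar>b\<bar>" and b0: "b \<noteq> 0"
  shows "\<exists>p' b'. p'^2 + 4*b'*c = 1 \<and> \<bar>b'\<bar> < \<bar>b\<bar> \<and>
           ((lat p' b' c :: 'a::field_char_0 mat2) \<in> orbit_x \<longleftrightarrow> (lat p b c :: 'a mat2) \<in> orbit_x)"
  using norm_one_reduce[OF norm cb b0]
proof
  assume smaller: "\<bar>b - p - c\<bar> < \<bar>b\<bar>"
  have "(p+2*c)^2 + 4*(b-p-c)*c = 1" using norm by (simp add: algebra_simps power2_eq_square)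
  moreover have "(lat (p+2*c) (b-p-c) c :: 'a mat2) \<in> orbit_x \<longleftrightarrow> (lat p b c :: 'a mat2) \<in> orbit_x"
    using orbit_x_invariant[OF Ggrp.gen_z, of "lat (p+2*c) (b-p-c) c"]
    by (auto simp: exp_ad_zs_lat)
  ultimately show ?thesis using smaller by (intro exI[of _ "p+2*c", OF exI[of _ "b-p-c"]]) simp
next
  assume smaller: "\<bar>b + p - c\<bar> < \<bar>b\<bar>"
  have "(p-2*c)^2 + 4*(b+p-c)*c = 1" using norm by (simp add: algebra_simps power2_eq_square)
  moreover have "(lat (p-2*c) (b+p-c) c :: 'a mat2) \<in> orbit_x \<longleftrightarrow> (lat p b c :: 'a mat2) \<in> orbit_x"
    using orbit_x_invariant[OF Ggrp.gen_z, of "lat p b c"] by (simp add: exp_ad_zs_lat)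
  ultimately show ?thesis using smaller by (intro exI[of _ "p-2*c", OF exI[of _ "b+p-c"]]) simp
qed

lemma descent_step:
  assumes norm: "p^2 + 4*b*c = 1" and nonzero: "b \<noteq> 0 \<or> c \<noteq> 0"
  shows "\<exists>p' b' c'. p'^2 + 4*b'*c' = 1 \<and> \<bar>b'\<bar> + \<bar>c'\<bar> < \<bar>b\<bar> + \<bar>c\<bar> \<and>
           ((lat p' b' c' :: 'a::field_char_0 mat2) \<in> orbit_x \<longleftrightarrow> (lat p b c :: 'a mat2) \<in> orbit_x)"
proof (cases "\<bar>c\<bar> \<le> \<bar>b\<bar>")
  case True
  with nonzero have "b \<noteq> 0" by auto
  then obtain p' b' where "p'^2 + 4*b'*c = 1" "\<bar>b'\<bar> < \<bar>b\<bar>"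
      "(lat p' b' c :: 'a mat2) \<in> orbit_x \<longleftrightarrow> (lat p b c :: 'a mat2) \<in> orbit_x"
    using descent_step_b[OF norm True] by blast
  then show ?thesis by (intro exI[of _ p', OF exI[of _ b', OF exI[of _ c]]]) simp
next
  case False
  have norm': "(-p)^2 + 4*(-c)*(-b) = 1" using norm by (simp add: algebra_simps)
  have swap_iff: "(lat (-p) (-c) (-b) :: 'a mat2) \<in> orbit_x \<longleftrightarrow> (lat p b c :: 'a mat2) \<in> orbit_x"
    using orbit_x_invariant[OF swap_Ggrp, of "lat p b c"] by (simp add: swap_lat)
  from False have "\<bar>-b\<bar> \<le> \<bar>-c\<bar>" "-c \<noteq> 0" by auto
  then obtain p' b' where "p'^2 + 4*b'*(-b) = 1" "\<bar>b'\<bar> < \<bar>-c\<bar>"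
      "(lat p' b' (-b) :: 'a mat2) \<in> orbit_x \<longleftrightarrow> (lat (-p) (-c) (-b) :: 'a mat2) \<in> orbit_x"
    using descent_step_b[OF norm'] by blast
  then show ?thesis using swap_iff by (intro exI[of _ p', OF exI[of _ b', OF exI[of _ "-b"]]]) simp
qed

text \<open>Every norm-one lattice vector lies in the orbit, by descent on |b| + |c|; the base
  cases are x = lat 1 0 0 and -x = swap x.\<close>
lemma norm_one_in_orbit:
  "p^2 + 4*b*c = 1 \<Longrightarrow> (lat p b c :: 'a::field_char_0 mat2) \<in> orbit_x"
proof (induction "nat (\<bar>b\<bar> + \<bar>c\<bar>)" arbitrary: p b c rule: less_induct)
  case less
  show ?case
  proof (cases "b = 0 \<and> c = 0")
    case True
    then have "p = 1 \<or> p = -1" using less.prems by (simp add: power2_eq_1_iff)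
    moreover have "(lat 1 0 0 :: 'a mat2) \<in> orbit_x" by (simp add: lat_ex ex_orbit_x)
    moreover have "swap (lat 1 0 0) = (lat (-1) 0 0 :: 'a mat2)" by (simp add: swap_lat)
    ultimately show ?thesis using True orbit_x_invariant[OF swap_Ggrp] by metis
  next
    case False
    then obtain p' b' c' where "p'^2 + 4*b'*c' = 1" "\<bar>b'\<bar> + \<bar>c'\<bar> < \<bar>b\<bar> + \<bar>c\<bar>"
        "(lat p' b' c' :: 'a mat2) \<in> orbit_x \<longleftrightarrow> (lat p b c :: 'a mat2) \<in> orbit_x"
      using descent_step[OF less.prems] by blast
    then show ?thesis using less.hyps[of b' c' p'] by auto
  qed
qed

theorem theorem4p11:
  "(\<lambda>g. g (ex :: 'a::field_char_0 mat2)) ` Ggrp = {u \<in> Lat. trform u u = 2}"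
proof
  show "(\<lambda>g. g (ex :: 'a::field_char_0 mat2)) ` Ggrp \<subseteq> {u \<in> Lat. trform u u = 2}"
    using sl2z_conj_ex Ggrp_sl2z_conj by blast
next
  show "{u \<in> Lat. trform u u = 2} \<subseteq> (\<lambda>g. g (ex :: 'a::field_char_0 mat2)) ` Ggrp"
  proof
    fix u :: "'a mat2"
    assume u: "u \<in> {u \<in> Lat. trform u u = 2}"
    then obtain p b c where u_lat: "u = lat p b c" using Lat_lat by blast
    have "(of_int (2*(p^2 + 4*b*c)) :: 'a) = of_int 2" using u by (simp add: u_lat trform_lat)
    then have "p^2 + 4*b*c = 1" by (simp only: of_int_eq_iff) simp
    then show "u \<in> (\<lambda>g. g ex) ` Ggrp" using norm_one_in_orbit u_lat orbit_x_def by blast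
  qed
qed

end
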